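(* Let $T:X\rightrightarrows X^*$ be a multivalued operator. Then $Z_{T^\rho}$ is a weakly closed convex subset of $X$, and $Z_{T^\mu}=Z_{T^\rho}$.
   Context: $X$ is a real Banach space with dual $X^*$ and pairing $\langle x,x^*\rangle=x^*(x)$. A multivalued operator $T:X\rightrightarrows X^*$ is identified with its graph $T\subset X\times X^*$, and $T(x)=\{x^*:(x,x^* )\in T\}$. The set of zeros of $T$ is $Z_T=\{x\in X: 0\in T(x)\}$. For $(x,x^* ),(y,y^* )\in X\times X^*$, write $(x,x^* )\sim_p(y,y^* )$ if either $\min\{\langle x-y,y^*\rangle,\langle y-x,x^*\rangle\}<0$ or $\langle x-y,y^*\rangle=\langle y-x,x^*\rangle=0$. The pseudomonotone polar of $T$ is $T^\rho=\{(x,x^* )\in X\times X^*: (x,x^* )\sim_p(y,y^* )\ \forall (y,y^* )\in T\}$. The monotone polar of $T$ is $T^\mu=\{(x,x^* )\in X\times X^*: \langle x-y,x^*-y^*\rangle\ge 0\ \forall (y,y^* )\in T\}$. *)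

theory Defs
  imports "HOL-Analysis.Analysis"
begin

text \<open>X is a real Banach space 'a::banach; its dual X* is the space of continuous
linear functionals (blinfun from 'a to real). Multivalued operators are identified with their graphs.\<close>

definition pairing :: "'a::real_normed_vector \<Rightarrow> ('a \<Rightarrow>\<^sub>L real) \<Rightarrow> real" where
  "pairing x xs = blinfun_apply xs x"

definition zeros :: "('a::real_normed_vector \<times> ('a \<Rightarrow>\<^sub>L real)) set \<Rightarrow> 'a set" where
  "zeros T = {x. (x, 0) \<in> T}"

definition sim_p :: "'a::real_normed_vector \<times> ('a \<Rightarrow>\<^sub>L real) \<Rightarrow> 'a \<times> ('a \<Rightarrow>\<^sub>L real) \<Rightarrow> bool" where
  "sim_p p q = (case p of (x, xs) \<Rightarrow> case q of (y, ys) \<Rightarrow>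
      min (pairing (x - y) ys) (pairing (y - x) xs) < 0
      \<or> (pairing (x - y) ys = 0 \<and> pairing (y - x) xs = 0))"

definition pseudomonotone_polar :: "('a::real_normed_vector \<times> ('a \<Rightarrow>\<^sub>L real)) set \<Rightarrow> ('a \<times> ('a \<Rightarrow>\<^sub>L real)) set" where
  "pseudomonotone_polar T = {p. \<forall>q\<in>T. sim_p p q}"

definition monotone_polar :: "('a::real_normed_vector \<times> ('a \<Rightarrow>\<^sub>L real)) set \<Rightarrow> ('a \<times> ('a \<Rightarrow>\<^sub>L real)) set" where
  "monotone_polar T = {(x, xs). \<forall>(y, ys)\<in>T. pairing (x - y) (xs - ys) \<ge> 0}"

definition weak_topology :: "('a::real_normed_vector) topology" where
  "weak_topology = topology_generated_by {{x. blinfun_apply f x \<in> U} | (f :: 'a \<Rightarrow>\<^sub>L real) (U :: real set). open U}"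

definition weakly_closed :: "('a::real_normed_vector) set \<Rightarrow> bool" where
  "weakly_closed S = closedin weak_topology S"

end

theory Submission
  imports Defs
begin

text \<open>For a zero x of either polar, the condition against a pair (y, y*) of T collapses to
  y*(x - y) \<le> 0 (for the pseudomonotone polar, the pairing with x* = 0 vanishes, which rules
  out the strict alternative). Hence both zero sets are the intersection of the closed
  half-spaces {x. y*(x) \<le> y*(y)}, which is convex and weakly closed.\<close>

lemma zeros_pseudomonotone_polar:
  "zeros (pseudomonotone_polar T) = (\<Inter>(y, ys)\<in>T. {x. blinfun_apply ys x \<le> blinfun_apply ys y})"
  unfolding zeros_def pseudomonotone_polar_def sim_p_def pairing_def
  by (auto simp: blinfun.diff_right min_def split: if_splits prod.splits; force)

lemma zeros_monotone_polar:
  "zeros (monotone_polar T) = (\<Inter>(y, ys)\<in>T. {x. blinfun_apply ys x \<le> blinfun_apply ys y})"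
  unfolding zeros_def monotone_polar_def pairing_def
  by (auto simp: blinfun.diff_right blinfun.diff_left)

lemma openin_weak_topology_vimage:
  fixes f :: "'a::real_normed_vector \<Rightarrow>\<^sub>L real"
  assumes "open U"
  shows "openin weak_topology {x. blinfun_apply f x \<in> U}"
  unfolding weak_topology_def
  by (rule topology_generated_by_Basis) (use assms in blast)

lemma topspace_weak_topology: "topspace (weak_topology :: 'a::real_normed_vector topology) = UNIV"
  using openin_subset[OF openin_weak_topology_vimage[of UNIV "0 :: 'a \<Rightarrow>\<^sub>L real"]] by auto

lemma weakly_closed_halfspace_le:
  fixes f :: "'a::real_normed_vector \<Rightarrow>\<^sub>L real"
  shows "weakly_closed {x. blinfun_apply f x \<le> c}"
proof -
  have "UNIV - {x. blinfun_apply f x \<le> c} = {x. blinfun_apply f x \<in> {c<..}}"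
    by auto
  then have "openin weak_topology (UNIV - {x. blinfun_apply f x \<le> c})"
    using openin_weak_topology_vimage[of "{c<..}" f] by simp
  then show ?thesis
    unfolding weakly_closed_def closedin_def topspace_weak_topology by simp
qed

lemma weakly_closed_INT:
  fixes B :: "'i \<Rightarrow> 'a::real_normed_vector set"
  assumes "\<And>i. i \<in> A \<Longrightarrow> weakly_closed (B i)"
  shows "weakly_closed (\<Inter>i\<in>A. B i)"
proof (cases "A = {}")
  case True
  then show ?thesis
    unfolding weakly_closed_def using closedin_topspace[of weak_topology]
    by (simp add: topspace_weak_topology)
next
  case False
  then show ?thesis
    using assms unfolding weakly_closed_def by (rule closedin_INT)
qed

lemma convex_halfspace_blinfun_le:
  fixes f :: "'a::real_normed_vector \<Rightarrow>\<^sub>L real"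
  shows "convex {x. blinfun_apply f x \<le> c}"
  using convex_linear_vimage[OF bounded_linear.linear[OF blinfun.bounded_linear_right],
      of "{..c}" f]
  by (simp add: vimage_def)

theorem mainTheorem2:
  fixes T :: "('a::banach \<times> ('a \<Rightarrow>\<^sub>L real)) set"
  shows "weakly_closed (zeros (pseudomonotone_polar T))
       \<and> convex (zeros (pseudomonotone_polar T))
       \<and> zeros (monotone_polar T) = zeros (pseudomonotone_polar T)"
  unfolding zeros_pseudomonotone_polar zeros_monotone_polar
  by (auto intro!: weakly_closed_INT weakly_closed_halfspace_le
      convex_INT convex_halfspace_blinfun_le)

end
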